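(* Given $n\in\mathbb N$ in unary, one can compute in polynomial time points $q_1,\dots,q_n\in\mathbb C$ with $|q_j|=1$ and rational real and imaginary parts, such that the only $(e_1,\dots,e_n)\in\mathbb Z^n$ with $q_1^{e_1}\cdots q_n^{e_n}=1$ is the zero vector. *)

theory Defs
  imports Complex_Main
begin

text \<open>A logarithmic-cost random access machine (RAM), used to express
  polynomial-time computability.  Memory cells are indexed by integers and hold
  integers; every operation is charged the bit lengths of the numbers involved
  (the standard log-cost RAM, polynomially equivalent to Turing machines).\<close>

fun bitlen_nat :: "nat \<Rightarrow> nat" where
  "bitlen_nat n = (if n \<le> 1 then 1 else Suc (bitlen_nat (n div 2)))"

definition bitlen :: "int \<Rightarrow> nat" where
  "bitlen z = bitlen_nat (nat \<bar>z\<bar>)"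

type_synonym mem = "int \<Rightarrow> int"

datatype binop = Plus | Minus | Times | Quot | Rem | Lt

fun apply_binop :: "binop \<Rightarrow> int \<Rightarrow> int \<Rightarrow> int" where
  "apply_binop Plus a b = a + b"
| "apply_binop Minus a b = a - b"
| "apply_binop Times a b = a * b"
| "apply_binop Quot a b = a div b"
| "apply_binop Rem a b = a mod b"
| "apply_binop Lt a b = (if a < b then 1 else 0)"

datatype expr = Const int | Load expr | Bin binop expr expr

fun eval :: "expr \<Rightarrow> mem \<Rightarrow> int \<times> nat" where
  "eval (Const c) s = (c, bitlen c)"
| "eval (Load e) s = (case eval e s of (a, t) \<Rightarrow> (s a, t + bitlen a + bitlen (s a) + 1))"
| "eval (Bin f e1 e2) s = (case eval e1 s of (a, t1) \<Rightarrow> case eval e2 s of (b, t2) \<Rightarrow>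
      (apply_binop f a b, t1 + t2 + bitlen a + bitlen b + 1))"

datatype com = Store expr expr | Seq com com | If expr com com | While expr com

inductive big :: "com \<Rightarrow> mem \<Rightarrow> mem \<Rightarrow> nat \<Rightarrow> bool" where
  Store: "eval e1 s = (a, t1) \<Longrightarrow> eval e2 s = (v, t2) \<Longrightarrow>
     big (Store e1 e2) s (s(a := v)) (t1 + t2 + bitlen a + bitlen v + 1)"
| Seq: "big c1 s s1 t1 \<Longrightarrow> big c2 s1 s2 t2 \<Longrightarrow> big (Seq c1 c2) s s2 (t1 + t2 + 1)"
| IfT: "eval b s = (v, t) \<Longrightarrow> v \<noteq> 0 \<Longrightarrow> big c1 s s' t' \<Longrightarrow> big (If b c1 c2) s s' (t + t' + 1)"
| IfF: "eval b s = (0, t) \<Longrightarrow> big c2 s s' t' \<Longrightarrow> big (If b c1 c2) s s' (t + t' + 1)"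
| WhileF: "eval b s = (0, t) \<Longrightarrow> big (While b c) s s (t + 1)"
| WhileT: "eval b s = (v, t) \<Longrightarrow> v \<noteq> 0 \<Longrightarrow> big c s s1 t1 \<Longrightarrow>
     big (While b c) s1 s2 t2 \<Longrightarrow> big (While b c) s s2 (t + t1 + t2 + 1)"

text \<open>Input convention: cell 0 holds \<open>n\<close>, all other cells are 0.
  (Time is measured as a function of \<open>n\<close>, i.e. of the unary input length.)\<close>
definition init_mem :: "nat \<Rightarrow> mem" where
  "init_mem n = (\<lambda>a. if a = 0 then int n else 0)"

definition out_point :: "mem \<Rightarrow> nat \<Rightarrow> complex" where
  "out_point s j = Complex (of_rat (Fract (s (4 * int j)) (s (4 * int j + 1))))
                           (of_rat (Fract (s (4 * int j + 2)) (s (4 * int j + 3))))"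

end

(* Take q_j = (a_j + i)/(a_j - i) with a_j = (2n)! j.  Then |q_j| = 1 and
   q_j = ((a_j^2 - 1) + 2 a_j i)/(a_j^2 + 1), so the program only needs integers of O(n^2) bits.
   A relation prod q_j^(e_j) = 1 says that w = prod (a_j + sgn(e_j) i)^|e_j| is real.  A prime p
   dividing a_j^2 + 1 is coprime to (2n)!, hence exceeds 2n; so p divides neither 2 a_j nor any
   a_k^2 + 1 with k /= j (it would divide k^2 - j^2).  If e_j /= 0, the reduction of Z[i] modulo p
   with i |-> -b, where b = sgn(e_j) a_j, sends w to 0 but its conjugate to a unit, which
   contradicts w = cnj w. *)
theory Submission
  imports Defs "HOL-Number_Theory.Cong"
begin

(* gauss_reduct b p w r: w is a Gaussian integer x + iy with x - yb = r (mod p), i.e. r is the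
   image of w under the map Z[i] -> Z/p sending i to -b, a ring map when p divides b^2 + 1. *)
definition gauss_reduct :: "int \<Rightarrow> int \<Rightarrow> complex \<Rightarrow> int \<Rightarrow> bool" where
  "gauss_reduct b p w r \<longleftrightarrow> (\<exists>x y. w = Complex (of_int x) (of_int y) \<and> [x - y * b = r] (mod p))"

lemma gauss_reduct_Complex: "gauss_reduct b p (Complex (of_int x) (of_int y)) (x - y * b)"
  unfolding gauss_reduct_def by (blast intro: cong_refl)

lemma gauss_reduct_one: "gauss_reduct b p 1 1"
  using gauss_reduct_Complex[of b p 1 0] by (simp add: one_complex.code)

lemma gauss_reduct_mult:
  assumes "gauss_reduct b p w r" "gauss_reduct b p w' r'" "p dvd b^2 + 1"
  shows "gauss_reduct b p (w * w') (r * r')"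
proof -
  obtain x y where w: "w = Complex (of_int x) (of_int y)" and r: "[x - y * b = r] (mod p)"
    using assms(1) gauss_reduct_def by auto
  obtain u v where w': "w' = Complex (of_int u) (of_int v)" and r': "[u - v * b = r'] (mod p)"
    using assms(2) gauss_reduct_def by auto
  have prod: "w * w' = Complex (of_int (x * u - y * v)) (of_int (x * v + y * u))"
    using w w' by (simp add: complex_eq_iff)
  have "(x - y * b) * (u - v * b) - ((x * u - y * v) - (x * v + y * u) * b) = y * v * (b^2 + 1)"
    by (simp add: algebra_simps power2_eq_square)
  then have "[(x * u - y * v) - (x * v + y * u) * b = (x - y * b) * (u - v * b)] (mod p)"
    using assms(3) by (metis cong_iff_dvd_diff cong_sym dvd_mult)
  also have "[(x - y * b) * (u - v * b) = r * r'] (mod p)"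
    using r r' by (rule cong_mult)
  finally show ?thesis
    unfolding gauss_reduct_def prod by blast
qed

lemma gauss_reduct_power: "gauss_reduct b p w r \<Longrightarrow> p dvd b^2 + 1 \<Longrightarrow> gauss_reduct b p (w ^ m) (r ^ m)"
  by (induction m) (auto simp: gauss_reduct_one gauss_reduct_mult)

lemma gauss_reduct_prod:
  "finite A \<Longrightarrow> (\<And>k. k \<in> A \<Longrightarrow> gauss_reduct b p (w k) (r k)) \<Longrightarrow> p dvd b^2 + 1 \<Longrightarrow>
   gauss_reduct b p (\<Prod>k\<in>A. w k) (\<Prod>k\<in>A. r k)"
  by (induction A rule: finite_induct) (auto simp: gauss_reduct_one gauss_reduct_mult)

lemma gauss_reduct_cnj: "gauss_reduct (- b) p w r \<Longrightarrow> gauss_reduct b p (cnj w) r"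
proof -
  assume "gauss_reduct (- b) p w r"
  then obtain x y where "w = Complex (of_int x) (of_int y)" "[x - y * (- b) = r] (mod p)"
    unfolding gauss_reduct_def by blast
  then have "cnj w = Complex (of_int x) (of_int (- y))" "[x - (- y) * b = r] (mod p)"
    by (auto simp: complex_eq_iff)
  then show ?thesis unfolding gauss_reduct_def by blast
qed

lemma gauss_reduct_unique: "gauss_reduct b p w r \<Longrightarrow> gauss_reduct b p w r' \<Longrightarrow> [r = r'] (mod p)"
  unfolding gauss_reduct_def by (metis complex.inject of_int_eq_iff cong_sym cong_trans)

definition cayley :: "int \<Rightarrow> complex" where
  "cayley a = Complex (of_int a) 1 / Complex (of_int a) (- 1)"

definition gauss_factor :: "int \<Rightarrow> int \<Rightarrow> complex" where
  "gauss_factor a e = (if 0 \<le> e then Complex (of_int a) 1 else Complex (of_int a) (- 1)) ^ nat \<bar>e\<bar>"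

lemma norm_cayley: "cmod (cayley a) = 1"
proof -
  have "cmod (Complex (of_int a) (- 1)) = cmod (Complex (of_int a) 1)"
    by (simp add: cmod_def)
  moreover have "Complex (of_int a) 1 \<noteq> 0"
    by (simp add: complex_eq_iff)
  ultimately show ?thesis
    by (simp add: cayley_def norm_divide)
qed

lemma gauss_factor_nonzero: "gauss_factor a e \<noteq> 0"
proof -
  have "Complex (of_int a) 1 \<noteq> 0" "Complex (of_int a) (- 1) \<noteq> 0"
    by (simp_all add: complex_eq_iff)
  then show ?thesis by (simp add: gauss_factor_def)
qed

lemma cayley_power_int: "cayley a powi e = gauss_factor a e / cnj (gauss_factor a e)"
proof (cases "0 \<le> e")
  case True
  then obtain m where "e = int m" by (metis nonneg_int_cases)
  then show ?thesis
    by (simp add: cayley_def gauss_factor_def power_divide complex_cnj_power complex_cnj)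
next
  case False
  then obtain m where "e = - int m" by (metis nonpos_int_cases linear)
  with False show ?thesis
    by (simp add: cayley_def gauss_factor_def power_divide complex_cnj_power complex_cnj
        power_int_minus_divide)
qed

lemma gauss_reduct_gauss_factor:
  assumes "p dvd b^2 + 1"
  shows "gauss_reduct b p (gauss_factor a e) ((if 0 \<le> e then a - b else a + b) ^ nat \<bar>e\<bar>)"
  using gauss_reduct_power[OF gauss_reduct_Complex[of b p a 1] assms]
    gauss_reduct_power[OF gauss_reduct_Complex[of b p a "- 1"] assms]
  by (simp add: gauss_factor_def)

lemma dvd_square_plus_one_if_dvd_sum_or_diff:
  fixes a b p :: int
  assumes "p dvd b^2 + 1" "p dvd a + b \<or> p dvd a - b"
  shows "p dvd a^2 + 1"
proof -
  have "p dvd (a + b) * (a - b) + (b^2 + 1)"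
    using assms by auto
  also have "(a + b) * (a - b) + (b^2 + 1) = a^2 + 1"
    by (simp add: algebra_simps power2_eq_square)
  finally show ?thesis .
qed

lemma prod_cayley_power_int_eq_1_iff:
  assumes "finite A"
  shows "(\<Prod>k\<in>A. cayley (a k) powi e k) = 1 \<longleftrightarrow>
           cnj (\<Prod>k\<in>A. gauss_factor (a k) (e k)) = (\<Prod>k\<in>A. gauss_factor (a k) (e k))"
proof -
  have "(\<Prod>k\<in>A. gauss_factor (a k) (e k)) \<noteq> 0"
    using assms by (simp add: gauss_factor_nonzero)
  then show ?thesis
    by (auto simp: cayley_power_int prod_dividef cnj_prod divide_eq_1_iff)
qed

lemma gauss_reduct_prod_gauss_factor:
  assumes "finite A" "p dvd b^2 + 1"
  shows "gauss_reduct b p (\<Prod>k\<in>A. gauss_factor (a k) (e k))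
           (\<Prod>k\<in>A. (if 0 \<le> e k then a k - b else a k + b) ^ nat \<bar>e k\<bar>)"
  using assms(1) gauss_reduct_gauss_factor[OF assms(2)] assms(2) by (rule gauss_reduct_prod)

lemma cayley_multiplicatively_independent:
  fixes a e :: "nat \<Rightarrow> int"
  assumes "finite A"
    and private_prime: "\<And>j. j \<in> A \<Longrightarrow> \<exists>p. prime p \<and> p dvd a j^2 + 1 \<and> \<not> p dvd 2 * a j \<and>
                                     (\<forall>k\<in>A - {j}. \<not> p dvd a k^2 + 1)"
    and one: "(\<Prod>k\<in>A. cayley (a k) powi e k) = 1"
    and "j \<in> A"
  shows "e j = 0"
proof (rule ccontr)
  assume "e j \<noteq> 0"
  define w where "w = (\<Prod>k\<in>A. gauss_factor (a k) (e k))"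
  have real: "cnj w = w"
    using one prod_cayley_power_int_eq_1_iff[OF \<open>finite A\<close>] by (simp add: w_def)
  obtain p where p: "prime p" "p dvd a j^2 + 1" "\<not> p dvd 2 * a j"
    and others: "\<forall>k\<in>A - {j}. \<not> p dvd a k^2 + 1"
    using private_prime[OF \<open>j \<in> A\<close>] by blast
  define b where "b = (if 0 < e j then a j else - a j)"
  have pb: "p dvd b^2 + 1" "p dvd (- b)^2 + 1"
    using p(2) by (simp_all add: b_def)
  define r where "r k = (if 0 \<le> e k then a k + b else a k - b) ^ nat \<bar>e k\<bar>" for k
  have "(if 0 \<le> e j then a j - b else a j + b) ^ nat \<bar>e j\<bar> = 0"
    using \<open>e j \<noteq> 0\<close> by (auto simp: b_def)
  then have "(\<Prod>k\<in>A. (if 0 \<le> e k then a k - b else a k + b) ^ nat \<bar>e k\<bar>) = 0"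
    using \<open>finite A\<close> \<open>j \<in> A\<close> prod_zero_iff by blast
  then have "gauss_reduct b p w 0"
    using gauss_reduct_prod_gauss_factor[OF \<open>finite A\<close> pb(1), where a = a and e = e] by (simp add: w_def)
  moreover have "gauss_reduct (- b) p w (\<Prod>k\<in>A. r k)"
    using gauss_reduct_prod_gauss_factor[OF \<open>finite A\<close> pb(2), where a = a and e = e]
    unfolding diff_minus_eq_add add_uminus_conv_diff by (simp add: w_def r_def)
  then have "gauss_reduct b p w (\<Prod>k\<in>A. r k)"
    using gauss_reduct_cnj[of b p w] real by simp
  ultimately have "[0 = (\<Prod>k\<in>A. r k)] (mod p)"
    by (rule gauss_reduct_unique)
  then have "p dvd (\<Prod>k\<in>A. r k)"
    by (rule cong_0_iff[THEN iffD1, OF cong_sym])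
  then obtain k where "k \<in> A" and "p dvd r k"
    by (subst (asm) prime_dvd_prod_iff[OF \<open>finite A\<close> p(1)]) blast
  then have pk: "p dvd (if 0 \<le> e k then a k + b else a k - b)"
    unfolding r_def using prime_dvd_power[OF p(1)] by blast
  show False
  proof (cases "k = j")
    case True
    have "(if 0 \<le> e j then a j + b else a j - b) = 2 * a j"
      using \<open>e j \<noteq> 0\<close> by (cases "0 < e j") (simp_all add: b_def)
    then show False
      using pk p(3) unfolding True by simp
  next
    case False
    have "p dvd a k + b \<or> p dvd a k - b"
      using pk by (cases "0 \<le> e k") simp_all
    then have "p dvd a k^2 + 1"
      by (rule dvd_square_plus_one_if_dvd_sum_or_diff[OF pb(1)])
    then show False
      using others \<open>k \<in> A\<close> False by blast
  qed
qed

lemma prime_dvd_fact_if_dvd: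
  fixes q x :: int
  assumes "prime q" "q dvd x" "0 < x" "x \<le> int m"
  shows "q dvd fact m"
proof -
  have "0 < q" "q \<le> x"
    using assms by (simp_all add: prime_gt_0_int zdvd_imp_le)
  then have "nat q dvd fact m"
    using assms(4) by (intro dvd_fact) auto
  then show ?thesis
    using \<open>0 < q\<close> by (metis of_nat_dvd_iff of_nat_fact int_nat_eq less_le_not_le)
qed

lemma private_prime_divisor:
  fixes n j :: nat
  defines "a \<equiv> \<lambda>k. fact (2 * n) * int k"
  assumes j: "j \<in> {1..n}"
  shows "\<exists>p. prime p \<and> p dvd a j^2 + 1 \<and> \<not> p dvd 2 * a j \<and> (\<forall>k\<in>{1..n} - {j}. \<not> p dvd a k^2 + 1)"
proof -
  have "1 * 1 \<le> a j"
    unfolding a_def using j by (intro mult_mono) auto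
  then have "2 \<le> a j^2 + 1"
    using one_le_power[of "a j" 2] by simp
  then have "a j^2 + 1 \<noteq> 0" "\<not> is_unit (a j^2 + 1)"
    by auto
  then obtain p where p: "prime p" "p dvd a j^2 + 1"
    using prime_divisor_exists by blast
  have "\<not> p dvd fact (2 * n)"
  proof
    assume "p dvd fact (2 * n)"
    then have "p dvd a j^2"
      by (simp add: a_def power2_eq_square)
    with p show False
      by (metis dvd_add_right_iff not_prime_unit)
  qed
  then have small: "\<not> p dvd x" if "0 < x" "x \<le> 2 * int n" for x
    using prime_dvd_fact_if_dvd[OF p(1) _ that(1)] that(2) by force
  have "\<not> p dvd 2 * a j"
    using p(1) small[of 2] small[of "int j"] j \<open>\<not> p dvd fact (2 * n)\<close>
    by (auto simp: a_def prime_dvd_mult_iff)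
  moreover have "\<not> p dvd a k^2 + 1" if k: "k \<in> {1..n} - {j}" for k
  proof
    assume "p dvd a k^2 + 1"
    then have "p dvd int k^2 * (a j^2 + 1) - int j^2 * (a k^2 + 1)"
      using p(2) by simp
    also have "int k^2 * (a j^2 + 1) - int j^2 * (a k^2 + 1) = (int k - int j) * (int k + int j)"
      by (simp add: a_def algebra_simps power2_eq_square)
    finally have "p dvd \<bar>int k - int j\<bar> \<or> p dvd int k + int j"
      using p(1) by (simp add: prime_dvd_mult_iff)
    then show False
      using small[of "\<bar>int k - int j\<bar>"] small[of "int k + int j"] j k by (auto simp: abs_if)
  qed
  ultimately show ?thesis
    using p by blast
qed

declare bitlen_nat.simps[simp del]

lemma bitlen_nat_le: "n < 2^m \<Longrightarrow> bitlen_nat n \<le> m + 1"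
proof (induction m arbitrary: n)
  case 0
  then show ?case by (subst bitlen_nat.simps) simp
next
  case (Suc m)
  show ?case
  proof (cases "n \<le> 1")
    case True
    then show ?thesis by (subst bitlen_nat.simps) simp
  next
    case False
    have "bitlen_nat (n div 2) \<le> m + 1"
      using Suc.prems by (intro Suc.IH) auto
    then show ?thesis
      using False by (subst bitlen_nat.simps) simp
  qed
qed

lemma bitlen_le: "\<bar>z\<bar> < 2^m \<Longrightarrow> bitlen z \<le> m + 1"
  unfolding bitlen_def
  by (rule bitlen_nat_le) (metis nat_less_iff abs_ge_zero of_nat_numeral of_nat_power)

lemma eval_Load:
  "eval (Load e) s = (s (fst (eval e s)),
     snd (eval e s) + bitlen (fst (eval e s)) + bitlen (s (fst (eval e s))) + 1)"
  by (simp split: prod.split)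

lemma eval_Bin:
  "eval (Bin f e1 e2) s = (apply_binop f (fst (eval e1 s)) (fst (eval e2 s)),
     snd (eval e1 s) + snd (eval e2 s) + bitlen (fst (eval e1 s)) + bitlen (fst (eval e2 s)) + 1)"
  by (simp split: prod.split)

declare eval.simps(2,3)[simp del]

fun expr_size :: "expr \<Rightarrow> nat" where
  "expr_size (Const c) = 1"
| "expr_size (Load e) = expr_size e + 1"
| "expr_size (Bin f e1 e2) = expr_size e1 + expr_size e2 + 1"

fun eval_fits :: "nat \<Rightarrow> expr \<Rightarrow> mem \<Rightarrow> bool" where
  "eval_fits K (Const c) s = (\<bar>c\<bar> < 2^K)"
| "eval_fits K (Load e) s = (eval_fits K e s \<and> \<bar>s (fst (eval e s))\<bar> < 2^K)"
| "eval_fits K (Bin f e1 e2) s = (eval_fits K e1 s \<and> eval_fits K e2 s \<and>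
     \<bar>apply_binop f (fst (eval e1 s)) (fst (eval e2 s))\<bar> < 2^K)"

lemma eval_fits_value: "eval_fits K e s \<Longrightarrow> \<bar>fst (eval e s)\<bar> < 2^K"
  by (induction e) (auto simp: eval_Load eval_Bin)

lemma eval_fits_cost: "eval_fits K e s \<Longrightarrow> snd (eval e s) \<le> expr_size e * (2*K + 3)"
proof (induction e)
  case (Const c)
  then show ?case using bitlen_le[of c K] by simp
next
  case (Load e)
  then show ?case
    using eval_fits_value[of K e s] bitlen_le[of "fst (eval e s)" K] bitlen_le[of "s (fst (eval e s))" K]
    by (simp add: eval_Load)
next
  case (Bin f e1 e2)
  then show ?case
    using eval_fits_value[of K e1 s] eval_fits_value[of K e2 s]
      bitlen_le[of "fst (eval e1 s)" K] bitlen_le[of "fst (eval e2 s)" K]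
    by (simp add: eval_Bin algebra_simps)
qed

definition runs_within :: "com \<Rightarrow> mem \<Rightarrow> mem \<Rightarrow> nat \<Rightarrow> bool" where
  "runs_within c s s' T \<longleftrightarrow> (\<exists>t. big c s s' t \<and> t \<le> T)"

lemma runs_within_mono: "runs_within c s s' T \<Longrightarrow> T \<le> T' \<Longrightarrow> runs_within c s s' T'"
  unfolding runs_within_def by fastforce

lemma runs_within_Store:
  assumes "eval_fits K e1 s" "eval_fits K e2 s"
  shows "runs_within (Store e1 e2) s (s(fst (eval e1 s) := fst (eval e2 s)))
           ((expr_size e1 + expr_size e2 + 1) * (2*K + 3))"
proof -
  have "big (Store e1 e2) s (s(fst (eval e1 s) := fst (eval e2 s)))
     (snd (eval e1 s) + snd (eval e2 s) + bitlen (fst (eval e1 s)) + bitlen (fst (eval e2 s)) + 1)"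
    by (rule big.Store) auto
  moreover have "snd (eval e1 s) + snd (eval e2 s) + bitlen (fst (eval e1 s)) + bitlen (fst (eval e2 s)) + 1
     \<le> (expr_size e1 + expr_size e2 + 1) * (2*K + 3)"
    using eval_fits_cost[OF assms(1)] eval_fits_cost[OF assms(2)]
      bitlen_le[OF eval_fits_value[OF assms(1)]] bitlen_le[OF eval_fits_value[OF assms(2)]]
    by (simp add: algebra_simps)
  ultimately show ?thesis
    unfolding runs_within_def by blast
qed

lemma runs_within_Seq:
  "runs_within c1 s s1 T1 \<Longrightarrow> runs_within c2 s1 s2 T2 \<Longrightarrow> runs_within (Seq c1 c2) s s2 (T1 + T2 + 1)"
  unfolding runs_within_def using big.Seq by fastforce

lemma runs_within_Seq_Store:
  "runs_within c (s(fst (eval e1 s) := fst (eval e2 s))) s2 T \<Longrightarrow> eval_fits K e1 s \<Longrightarrow> eval_fits K e2 s \<Longrightarrow>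
   runs_within (Seq (Store e1 e2) c) s s2 ((expr_size e1 + expr_size e2 + 1) * (2*K + 3) + T + 1)"
  by (rule runs_within_Seq[OF runs_within_Store])

lemma runs_within_WhileF:
  assumes "eval_fits K b s" "fst (eval b s) = 0"
  shows "runs_within (While b c) s s (expr_size b * (2*K + 3) + 1)"
proof -
  have "eval b s = (0, snd (eval b s))"
    using assms(2) by (metis prod.collapse)
  then have "big (While b c) s s (snd (eval b s) + 1)"
    by (rule big.WhileF)
  then show ?thesis
    using eval_fits_cost[OF assms(1)] unfolding runs_within_def by fastforce
qed

lemma runs_within_WhileT:
  assumes "eval_fits K b s" "fst (eval b s) \<noteq> 0"
    and "runs_within c s s1 T1" "runs_within (While b c) s1 s2 T2"
  shows "runs_within (While b c) s s2 (expr_size b * (2*K + 3) + T1 + T2 + 1)"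
proof -
  obtain t1 t2 where "big c s s1 t1" "t1 \<le> T1" "big (While b c) s1 s2 t2" "t2 \<le> T2"
    using assms(3,4) unfolding runs_within_def by blast
  then have "big (While b c) s s2 (snd (eval b s) + t1 + t2 + 1)"
    using assms(2) by (intro big.WhileT[of b s "fst (eval b s)"]) auto
  moreover have "snd (eval b s) + t1 + t2 + 1 \<le> expr_size b * (2*K + 3) + T1 + T2 + 1"
    using eval_fits_cost[OF assms(1)] \<open>t1 \<le> T1\<close> \<open>t2 \<le> T2\<close> by linarith
  ultimately show ?thesis
    unfolding runs_within_def by blast
qed

lemma runs_within_While:
  assumes test_true: "\<And>j s. P j s \<Longrightarrow> j < N \<Longrightarrow> eval_fits K b s \<and> fst (eval b s) \<noteq> 0"
    and test_false: "\<And>s. P N s \<Longrightarrow> eval_fits K b s \<and> fst (eval b s) = 0"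
    and body: "\<And>j s. P j s \<Longrightarrow> j < N \<Longrightarrow> \<exists>s'. runs_within c s s' T \<and> P (Suc j) s'"
    and "P j s" "j \<le> N"
  shows "\<exists>s'. runs_within (While b c) s s'
               ((N - j) * (expr_size b * (2*K + 3) + T + 1) + expr_size b * (2*K + 3) + 1) \<and> P N s'"
  using \<open>P j s\<close> \<open>j \<le> N\<close>
proof (induction "N - j" arbitrary: j s)
  case 0
  then have "P N s" by simp
  then have "eval_fits K b s" "fst (eval b s) = 0"
    using test_false by simp_all
  then have "runs_within (While b c) s s (expr_size b * (2*K + 3) + 1)"
    by (rule runs_within_WhileF)
  then show ?case
    using \<open>P N s\<close> 0 by auto
next
  case (Suc d)
  then have "j < N" by simp
  define D where "D = N - Suc j"
  have "N - j = Suc D"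
    using \<open>j < N\<close> by (simp add: D_def)
  obtain s1 where s1: "runs_within c s s1 T" "P (Suc j) s1"
    using body[OF Suc.prems(1) \<open>j < N\<close>] by blast
  have "d = N - Suc j"
    using Suc.hyps(2) by simp
  from Suc.hyps(1)[OF this s1(2) Suc_leI[OF \<open>j < N\<close>], folded D_def]
  obtain s2 where s2: "runs_within (While b c) s1 s2
      (D * (expr_size b * (2*K + 3) + T + 1) + expr_size b * (2*K + 3) + 1)" "P N s2"
    by blast
  have "eval_fits K b s" "fst (eval b s) \<noteq> 0"
    using test_true[OF Suc.prems(1) \<open>j < N\<close>] by simp_all
  from runs_within_WhileT[OF this s1(1) s2(1)]
  have "runs_within (While b c) s s2 (Suc D * (expr_size b * (2*K + 3) + T + 1) + expr_size b * (2*K + 3) + 1)"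
    by (simp add: algebra_simps)
  then show ?case
    unfolding \<open>N - j = Suc D\<close> using s2(2) by blast
qed

(* Memory layout: cell 0 holds n, cell -1 an accumulator, cell -2 a loop counter and cell -3 a
   scratch value.  The first loop leaves (2n)! in cell -1; the second one writes, for a = (2n)! j,
   the point cayley a = (a + i)^2/(a^2 + 1) = (a^2 - 1)/(a^2 + 1) + i 2a/(a^2 + 1) into the
   cells 4j, ..., 4j + 3. *)

definition fact_test :: expr where
  "fact_test = Bin Lt (Load (Const (-2))) (Bin Plus (Bin Times (Const 2) (Load (Const 0))) (Const 1))"

definition fact_step :: com where
  "fact_step = Seq (Store (Const (-1)) (Bin Times (Load (Const (-1))) (Load (Const (-2)))))
                   (Store (Const (-2)) (Bin Plus (Load (Const (-2))) (Const 1)))"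

definition fact_inv :: "nat \<Rightarrow> nat \<Rightarrow> mem \<Rightarrow> bool" where
  "fact_inv n j s \<longleftrightarrow> s 0 = int n \<and> s (-1) = fact j \<and> s (-2) = int j + 1"

definition point_test :: expr where
  "point_test = Bin Lt (Load (Const (-2))) (Bin Plus (Load (Const 0)) (Const 1))"

definition point_step :: com where
  "point_step =
    Seq (Store (Const (-3)) (Bin Times (Load (Const (-1))) (Load (Const (-2)))))
   (Seq (Store (Bin Times (Const 4) (Load (Const (-2))))
               (Bin Minus (Bin Times (Load (Const (-3))) (Load (Const (-3)))) (Const 1)))
   (Seq (Store (Bin Plus (Bin Times (Const 4) (Load (Const (-2)))) (Const 1))
               (Bin Plus (Bin Times (Load (Const (-3))) (Load (Const (-3)))) (Const 1)))
   (Seq (Store (Bin Plus (Bin Times (Const 4) (Load (Const (-2)))) (Const 2))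
               (Bin Times (Const 2) (Load (Const (-3)))))
   (Seq (Store (Bin Plus (Bin Times (Const 4) (Load (Const (-2)))) (Const 3))
               (Bin Plus (Bin Times (Load (Const (-3))) (Load (Const (-3)))) (Const 1)))
        (Store (Const (-2)) (Bin Plus (Load (Const (-2))) (Const 1)))))))"

definition point_inv :: "nat \<Rightarrow> int \<Rightarrow> nat \<Rightarrow> mem \<Rightarrow> bool" where
  "point_inv n F j s \<longleftrightarrow> s 0 = int n \<and> s (-1) = F \<and> s (-2) = int j + 1 \<and>
     (\<forall>k. 1 \<le> k \<and> k \<le> j \<longrightarrow> s (4 * int k) = (F * int k)^2 - 1 \<and> s (4 * int k + 1) = (F * int k)^2 + 1 \<and>
        s (4 * int k + 2) = 2 * (F * int k) \<and> s (4 * int k + 3) = (F * int k)^2 + 1)"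

definition cayley_prog :: com where
  "cayley_prog =
    Seq (Store (Const (-1)) (Const 1)) (Seq (Store (Const (-2)) (Const 1))
   (Seq (While fact_test fact_step) (Seq (Store (Const (-2)) (Const 1)) (While point_test point_step))))"

lemma fact_loop_runs:
  assumes hK: "(16::int) \<le> 2^K" and hn: "4 * int n + 8 < 2^K" and hn': "n < (2::nat)^K"
    and hf: "(fact (2*n) :: int) < 2^K" and "fact_inv n 0 s"
  shows "\<exists>s'. runs_within (While fact_test fact_step) s s'
           ((2*n) * (9 * (2*K + 3) + 14 * (2*K + 3) + 1) + 9 * (2*K + 3) + 1) \<and> fact_inv n (2*n) s'"
proof -
  have fact_less: "(fact j :: int) < 2^K" if "j \<le> 2*n" for j
    using hf that by (smt (verit) fact_mono of_nat_fact of_nat_le_iff)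
  have "\<exists>s'. runs_within (While fact_test fact_step) s s'
      ((2*n - 0) * (expr_size fact_test * (2*K + 3) + 14 * (2*K + 3) + 1) + expr_size fact_test * (2*K + 3) + 1)
      \<and> fact_inv n (2*n) s'"
  proof (rule runs_within_While[where P = "fact_inv n"])
    show "eval_fits K fact_test s \<and> fst (eval fact_test s) \<noteq> 0" if "fact_inv n j s" "j < 2*n" for j s
      using that hK hn hn' by (simp add: fact_test_def fact_inv_def eval_Load eval_Bin eval.simps)
    show "eval_fits K fact_test s \<and> fst (eval fact_test s) = 0" if "fact_inv n (2*n) s" for s
      using that hK hn hn' by (simp add: fact_test_def fact_inv_def eval_Load eval_Bin eval.simps)
  next
    fix j s assume inv: "fact_inv n j s" and "j < 2*n"
    have fits: "(fact j :: int) * (int j + 1) < 2^K" "(fact j :: int) < 2^K"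
      using fact_less[of "Suc j"] fact_less[of j] \<open>j < 2*n\<close> by (simp_all add: algebra_simps)
    show "\<exists>s'. runs_within fact_step s s' (14 * (2*K + 3)) \<and> fact_inv n (Suc j) s'"
      unfolding fact_step_def
      apply (rule exI, rule conjI, rule runs_within_mono, rule runs_within_Seq_Store[where K = K],
          rule runs_within_Store[where K = K])
      using fits inv \<open>j < 2*n\<close> hK hn hn' by (simp_all add: fact_inv_def eval_Load eval_Bin eval.simps)
  qed (use \<open>fact_inv n 0 s\<close> in simp_all)
  then show ?thesis
    by (simp add: fact_test_def)
qed

lemma point_inv_Suc:
  assumes "point_inv n F j s" "s' 0 = int n" "s' (-1) = F" "s' (-2) = int j + 2"
    and "s' (4 * int j + 4) = (F * (int j + 1))^2 - 1" "s' (4 * int j + 5) = (F * (int j + 1))^2 + 1"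
    and "s' (4 * int j + 6) = 2 * (F * (int j + 1))" "s' (4 * int j + 7) = (F * (int j + 1))^2 + 1"
    and unchanged: "\<And>a. 0 < a \<Longrightarrow> a < 4 * int j + 4 \<Longrightarrow> s' a = s a"
  shows "point_inv n F (Suc j) s'"
proof -
  have "s' (4 * int k) = (F * int k)^2 - 1 \<and> s' (4 * int k + 1) = (F * int k)^2 + 1 \<and>
        s' (4 * int k + 2) = 2 * (F * int k) \<and> s' (4 * int k + 3) = (F * int k)^2 + 1"
    if k: "1 \<le> k \<and> k \<le> Suc j" for k
  proof (cases "k = Suc j")
    case True
    then show ?thesis using assms(5-8) by (simp add: add.commute add.left_commute)
  next
    case False
    then show ?thesis
      using k assms(1) unchanged[of "4 * int k"] unchanged[of "4 * int k + 1"]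
        unchanged[of "4 * int k + 2"] unchanged[of "4 * int k + 3"]
      unfolding point_inv_def by auto
  qed
  then show ?thesis
    using assms(2-4) unfolding point_inv_def by simp
qed

lemma point_step_runs:
  assumes hK: "(16::int) \<le> 2^K" and hn: "4 * int n + 8 < 2^K" and hn': "n < (2::nat)^K"
    and inv: "point_inv n F j s" and "j < n" and "0 \<le> F"
    and square_less: "F * (int j + 1) * (F * (int j + 1)) + 1 < 2^K"
  shows "\<exists>s'. runs_within point_step s s' (70 * (2*K + 3)) \<and> point_inv n F (Suc j) s'"
proof -
  define a where "a = F * (int j + 1)"
  have "0 \<le> a" "a * a + 1 < 2^K"
    using \<open>0 \<le> F\<close> square_less by (simp_all add: a_def)
  moreover have "0 \<le> a * a" "2 * a \<le> a * a + 1"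
    using zero_le_square[of "a - 1"] by (simp_all add: algebra_simps)
  ultimately have fits: "\<bar>a\<bar> < 2^K" "\<bar>a * a - 1\<bar> < 2^K" "\<bar>a * a + 1\<bar> < 2^K" "\<bar>2 * a\<bar> < 2^K"
    using hK by (auto simp: abs_less_iff)
  have F_fits: "\<bar>F\<bar> < 2^K"
    using \<open>0 \<le> F\<close> fits(1) mult_le_cancel_left1[of F "int j + 1"] by (simp add: a_def)
  have cells: "s 0 = int n" "s (-1) = F" "s (-2) = int j + 1"
    using inv by (simp_all add: point_inv_def)
  show ?thesis
    unfolding point_step_def
    apply (rule exI, rule conjI, rule runs_within_mono)
    apply (rule runs_within_Seq_Store[where K = K])+
    apply (rule runs_within_Store[where K = K])
    using F_fits cells \<open>j < n\<close> fits hK hn hn' apply (simp_all add: eval_Load eval_Bin eval.simps a_def)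
    apply (rule point_inv_Suc[OF inv])
    using inv by (simp_all add: point_inv_def a_def power2_eq_square)
qed

lemma point_loop_runs:
  assumes hK: "(16::int) \<le> 2^K" and hn: "4 * int n + 8 < 2^K" and hn': "n < (2::nat)^K"
    and "0 \<le> F" and square_less: "\<And>j. j < n \<Longrightarrow> F * (int j + 1) * (F * (int j + 1)) + 1 < 2^K"
    and "point_inv n F 0 s"
  shows "\<exists>s'. runs_within (While point_test point_step) s s'
           (n * (7 * (2*K + 3) + 70 * (2*K + 3) + 1) + 7 * (2*K + 3) + 1) \<and> point_inv n F n s'"
proof -
  have "\<exists>s'. runs_within (While point_test point_step) s s'
      ((n - 0) * (expr_size point_test * (2*K + 3) + 70 * (2*K + 3) + 1) + expr_size point_test * (2*K + 3) + 1)
      \<and> point_inv n F n s'"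
  proof (rule runs_within_While[where P = "point_inv n F"])
    show "eval_fits K point_test s \<and> fst (eval point_test s) \<noteq> 0" if "point_inv n F j s" "j < n" for j s
      using that hK hn hn' by (simp add: point_test_def point_inv_def eval_Load eval_Bin eval.simps)
    show "eval_fits K point_test s \<and> fst (eval point_test s) = 0" if "point_inv n F n s" for s
      using that hK hn hn' by (simp add: point_test_def point_inv_def eval_Load eval_Bin eval.simps)
    show "\<exists>s'. runs_within point_step s s' (70 * (2*K + 3)) \<and> point_inv n F (Suc j) s'"
      if "point_inv n F j s" "j < n" for j s
      using point_step_runs[OF hK hn hn' that \<open>0 \<le> F\<close> square_less[OF that(2)]] .
  qed (use \<open>point_inv n F 0 s\<close> in simp_all)
  then show ?thesis
    by (simp add: point_test_def)
qed

lemma fact_double_le_power: "(fact (2*n) :: int) \<le> 2^(4*n*n)"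
proof -
  have "fact (2*n) \<le> (2*n)^(2*n)"
    by (rule fact_le_power[where 'a = nat, simplified])
  also have "(2*n)^(2*n) \<le> (2^(2*n) :: nat)^(2*n)"
    by (intro power_mono) (auto intro: less_imp_le less_exp)
  also have "\<dots> = 2^(4*n*n)"
    by (simp add: power_mult[symmetric] mult.assoc mult.left_commute)
  finally have "int (fact (2*n)) \<le> int (2^(4*n*n))"
    by (simp only: of_nat_le_iff)
  then show ?thesis
    by (simp add: of_nat_fact)
qed

lemma square_plus_one_le_power:
  fixes x :: int
  assumes "0 \<le> x" "x \<le> 2^m"
  shows "x * x + 1 \<le> 2^(2*m + 1)"
proof -
  have "x * x \<le> 2^m * 2^m"
    using assms by (intro mult_mono) auto
  also have "\<dots> = 2^(2*m)"
    by (simp add: power_add[symmetric] mult_2)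
  finally have "x * x \<le> 2^(2*m)" .
  moreover have "(1::int) \<le> 2^(2*m)"
    by simp
  ultimately have "x * x + 1 \<le> 2 * 2^(2*m)"
    by linarith
  then show ?thesis
    by simp
qed

(* K bounds the bit length of every number the program handles, the largest being
   ((2n)! n)^2 + 1 <= 2^(8n^2 + 2n + 1). *)
lemma word_size_bounds:
  fixes n :: nat
  defines "K \<equiv> 10 * (n + 1)^2"
  shows "(16::int) \<le> 2^K" "4 * int n + 8 < 2^K" "n < (2::nat)^K" "(fact (2*n) :: int) < 2^K"
    and "j < n \<Longrightarrow> (fact (2*n) :: int) * (int j + 1) * (fact (2*n) * (int j + 1)) + 1 < 2^K"
proof -
  have "(16::int) = 2^4" by simp
  also have "(2::int)^4 \<le> 2^K"
    by (intro power_increasing) (auto simp: K_def power2_eq_square)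
  finally show "(16::int) \<le> 2^K" .
  have "4*n + 8 < (2::nat)^(4*n + 8)"
    by (rule less_exp)
  also have "(2::nat)^(4*n + 8) \<le> 2^K"
    by (intro power_increasing) (auto simp: K_def power2_eq_square)
  finally have n_less: "4*n + 8 < (2::nat)^K" .
  then have "int (4*n + 8) < int (2^K)"
    by (simp only: of_nat_less_iff)
  then show "4 * int n + 8 < 2^K" by simp
  show "n < (2::nat)^K" using n_less by simp
  have "(fact (2*n) :: int) \<le> 2^(4*n*n)"
    by (rule fact_double_le_power)
  also have "(2::int)^(4*n*n) < 2^K"
    by (intro power_strict_increasing) (auto simp: K_def power2_eq_square)
  finally show "(fact (2*n) :: int) < 2^K" .
  assume "j < n"
  have "j + 1 \<le> (2::nat)^n"
    using \<open>j < n\<close> less_exp[of n] by linarith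
  then have "int (j + 1) \<le> int (2^n)"
    by (simp only: of_nat_le_iff)
  then have "int j + 1 \<le> 2^n"
    by simp
  then have "(fact (2*n) :: int) * (int j + 1) \<le> 2^(4*n*n) * 2^n"
    using fact_double_le_power[of n] by (intro mult_mono) auto
  then have "(fact (2*n) :: int) * (int j + 1) * (fact (2*n) * (int j + 1)) + 1 \<le> 2^(2*(4*n*n + n) + 1)"
    by (intro square_plus_one_le_power) (auto simp: power_add)
  also have "(2::int)^(2*(4*n*n + n) + 1) < 2^K"
    by (intro power_strict_increasing) (auto simp: K_def power2_eq_square)
  finally show "(fact (2*n) :: int) * (int j + 1) * (fact (2*n) * (int j + 1)) + 1 < 2^K" .
qed

(* The cost of cayley_prog as assembled in cayley_prog_runs, where X = 2K + 3 is the cost of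
   one operation on K-bit numbers. *)
lemma cayley_prog_time_le:
  fixes n X :: nat
  assumes X: "X = 2 * (10 * (n + 1)^2) + 3"
  shows "3*X + (3*X + ((2*n) * (9*X + 14*X + 1) + 9*X + 1 + (3*X + (n * (7*X + 70*X + 1) + 7*X + 1) + 1) + 1) + 1) + 1
         \<le> 4000 * (n + 1)^3"
proof -
  define M where "M = n + 1"
  have "1 \<le> X" "n \<le> M" "1 \<le> M"
    using X by (simp_all add: M_def)
  then have MX: "n * X \<le> M * X" "X \<le> M * X" "1 \<le> M * X"
    by (simp_all add: mult_le_mono)
  have "M \<le> M * X"
    using \<open>1 \<le> X\<close> by simp
  then have "n \<le> M * X"
    using \<open>n \<le> M\<close> by linarith
  have "3*X + (3*X + ((2*n) * (9*X + 14*X + 1) + 9*X + 1 + (3*X + (n * (7*X + 70*X + 1) + 7*X + 1) + 1) + 1) + 1) + 1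
      = 25*X + 123*(n*X) + 3*n + 6"
    by (simp add: algebra_simps)
  also have "\<dots> \<le> 158 * (M * X)"
    using MX \<open>n \<le> M * X\<close> by linarith
  also have "\<dots> \<le> 158 * (M * (23 * (M * M)))"
    using X by (intro mult_le_mono2) (simp add: M_def power2_eq_square algebra_simps)
  also have "158 * (M * (23 * (M * M))) \<le> 4000 * (M * M * M)"
    by simp
  also have "\<dots> = 4000 * (n + 1)^3"
    by (simp add: M_def power3_eq_cube)
  finally show ?thesis .
qed

lemma out_point_cayley:
  assumes "s (4 * int j) = a^2 - 1" "s (4 * int j + 1) = a^2 + 1"
    and "s (4 * int j + 2) = 2 * a" "s (4 * int j + 3) = a^2 + 1"
  shows "out_point s j = cayley a"
proof -
  have "(of_int a :: real)^2 + 1 \<noteq> 0"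
    using zero_le_power2[of "of_int a :: real"] by linarith
  then show ?thesis
    unfolding out_point_def assms Fract_of_int_quotient of_rat_divide of_rat_of_int_eq cayley_def
    by (simp add: complex_eq_iff Re_divide Im_divide power2_eq_square field_simps)
qed

lemma cayley_prog_runs:
  "\<exists>s'. runs_within cayley_prog (init_mem n) s' (4000 * (n + 1)^3) \<and>
        (\<forall>j\<in>{1..n}. out_point s' j = cayley (fact (2 * n) * int j))"
proof -
  define K where "K = 10 * (n + 1)^2"
  define X where "X = 2*K + 3"
  define F :: int where "F = fact (2 * n)"
  note bounds = word_size_bounds[where n = n, folded K_def]
  have set_cell: "runs_within (Store (Const a) (Const 1)) s (s(a := 1)) (3 * X)" if "a \<in> {-1, -2}" for a s
    using runs_within_Store[of K "Const a" s "Const 1"] bounds(1) that by (auto simp: X_def eval.simps)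
  define s0 where "s0 = (init_mem n)(-1 := 1, -2 := 1)"
  have "fact_inv n 0 s0"
    by (simp add: fact_inv_def s0_def init_mem_def)
  then obtain s1 where loop1: "runs_within (While fact_test fact_step) s0 s1
      ((2*n) * (9*X + 14*X + 1) + 9*X + 1)" and "fact_inv n (2*n) s1"
    using fact_loop_runs[OF bounds(1-4)] unfolding X_def by blast
  then have "point_inv n F 0 (s1(-2 := 1))"
    by (simp add: fact_inv_def point_inv_def F_def)
  moreover have "0 \<le> F"
    by (simp add: F_def)
  ultimately obtain s2 where loop2: "runs_within (While point_test point_step) (s1(-2 := 1)) s2
      (n * (7*X + 70*X + 1) + 7*X + 1)" and "point_inv n F n s2"
    using point_loop_runs[OF bounds(1-3) _ bounds(5)[folded F_def]] unfolding X_def by blast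
  have "runs_within cayley_prog (init_mem n) s2 (3*X + (3*X + (((2*n) * (9*X + 14*X + 1) + 9*X + 1) +
      (3*X + (n * (7*X + 70*X + 1) + 7*X + 1) + 1) + 1) + 1) + 1)"
    unfolding cayley_prog_def using loop1[unfolded s0_def]
    by (intro runs_within_Seq[OF set_cell runs_within_Seq[OF set_cell runs_within_Seq[OF _
        runs_within_Seq[OF set_cell loop2]]]]) simp_all
  then have "runs_within cayley_prog (init_mem n) s2 (4000 * (n + 1)^3)"
    by (rule runs_within_mono) (rule cayley_prog_time_le, simp add: X_def K_def)
  moreover have "out_point s2 j = cayley (F * int j)" if "j \<in> {1..n}" for j
    by (rule out_point_cayley) (use \<open>point_inv n F n s2\<close> that in \<open>auto simp: point_inv_def\<close>)
  ultimately show ?thesis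
    unfolding F_def by blast
qed

theorem mainTheorem13:
  shows "\<exists>prog :: com. \<exists>c k :: nat. \<forall>n :: nat. \<exists>s' t.
    big prog (init_mem n) s' t \<and> t \<le> c * (n + 1) ^ k \<and>
    (\<forall>j\<in>{1..n}. cmod (out_point s' j) = 1) \<and>
    (\<forall>e :: nat \<Rightarrow> int. (\<Prod>j=1..n. out_point s' j powi e j) = 1 \<longrightarrow> (\<forall>j\<in>{1..n}. e j = 0))"
proof (rule exI[of _ cayley_prog], rule exI[of _ 4000], rule exI[of _ 3], rule allI)
  fix n
  define a where "a k = fact (2 * n) * int k" for k
  obtain s' where "runs_within cayley_prog (init_mem n) s' (4000 * (n + 1) ^ 3)"
    and out: "\<forall>j\<in>{1..n}. out_point s' j = cayley (a j)"
    using cayley_prog_runs unfolding a_def by blast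
  then obtain t where "big cayley_prog (init_mem n) s' t" "t \<le> 4000 * (n + 1) ^ 3"
    unfolding runs_within_def by blast
  moreover have "\<forall>j\<in>{1..n}. cmod (out_point s' j) = 1"
    using out by (simp add: norm_cayley)
  moreover have "e j = 0"
    if "(\<Prod>j=1..n. out_point s' j powi e j) = 1" "j \<in> {1..n}" for e :: "nat \<Rightarrow> int" and j
  proof (rule cayley_multiplicatively_independent[OF _ _ _ \<open>j \<in> {1..n}\<close>])
    show "\<exists>p. prime p \<and> p dvd a i^2 + 1 \<and> \<not> p dvd 2 * a i \<and> (\<forall>k\<in>{1..n} - {i}. \<not> p dvd a k^2 + 1)"
      if "i \<in> {1..n}" for i
      using private_prime_divisor[OF that] unfolding a_def .
    show "(\<Prod>k\<in>{1..n}. cayley (a k) powi e k) = 1"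
      using that(1) out by simp
  qed simp
  ultimately show "\<exists>s' t. big cayley_prog (init_mem n) s' t \<and> t \<le> 4000 * (n + 1) ^ 3 \<and>
    (\<forall>j\<in>{1..n}. cmod (out_point s' j) = 1) \<and>
    (\<forall>e :: nat \<Rightarrow> int. (\<Prod>j=1..n. out_point s' j powi e j) = 1 \<longrightarrow> (\<forall>j\<in>{1..n}. e j = 0))"
    by blast
qed

end
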